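(* Let $\vec{\mathcal G}$ be an ergodic graph of a deterministic two-player mean-payoff game and suppose $r\in\mathcal P^{\sigma,\tau}$ for some $(\sigma,\tau)\in\Xi$. Then for every edge $(i,j)\in E$ not used by $(\sigma,\tau)$ (i.e. $i\in V_{\max}$ and $j\ne\sigma(i)$, or $i\in V_{\min}$ and $j\ne\tau(i)$), $$Z_{ij}=\lambda^{\sigma,\tau}(r)+u^{\sigma,\tau}_i(r)-u^{\sigma,\tau}_j(r).$$
   Context: Setting: directed graph $\vec{\mathcal G}=([n],E)$ without multiple edges, each vertex having an outgoing edge, $[n]=V_{\max}\uplus V_{\min}$, weights $r\in\mathbb R^E$; $(x,r_{-ij})$ is $r$ with coordinate $ij$ replaced by $x$. Ergodic equation in $(\lambda,u)$: $\lambda+u_i=\max_{(i,j)\in E}\{r_{ij}+u_j\}$ ($i\in V_{\max}$), $\lambda+u_i=\min_{(i,j)\in E}\{r_{ij}+u_j\}$ ($i\in V_{\min}$); $u$ is a bias if $(\lambda,u)$ solves it; ergodic graph: solvable for every $r$. A pair of policies $(\sigma,\tau)$ is bias-induced if some bias makes every $\sigma(i)$ attain the max and every $\tau(i)$ attain the min. $\vec{\mathcal G}^{\sigma,\tau}$ keeps at each vertex only its chosen edge; $\Xi$: pairs for which it has exactly one directed cycle. For $(\sigma,\tau)\in\Xi$, $\lambda^{\sigma,\tau}(r)$ is the mean weight of that cycle and $u^{\sigma,\tau}(r)_l$ is the total weight, for edge weights $r_{ij}-\lambda^{\sigma,\tau}(r)$, of the path in $\vec{\mathcal G}^{\sigma,\tau}$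 from $l$ to the smallest-index vertex on the cycle. $\mathcal P^{\sigma,\tau}$: set of $r$ for which $(\sigma,\tau)$ is the only bias-induced pair; $\mathcal U=\bigcup_{\Xi}\mathcal P^{\sigma,\tau}$. For $i\in V_{\min}$: $Z_{ij}=\inf\{x: (x,r_{-ij})\in\mathcal U$ and the game with weights $(x,r_{-ij})$ has a bias-induced pair $(\sigma',\tau')\in\Xi$ with $\tau'(i)\ne j\}$; for $i\in V_{\max}$: $Z_{ij}=\sup\{x: (x,r_{-ij})\in\mathcal U$ and the game with weights $(x,r_{-ij})$ has a bias-induced pair $(\sigma',\tau')\in\Xi$ with $\sigma'(i)\ne j\}$. *)

theory Defs
  imports Complex_Main
begin

text \<open>Game graph: vertices V = {1..n}, edge set E, Max-vertices Vmax, Min-vertices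
  Vmin = V - Vmax. Weights r are functions on pairs; only values on E matter.\<close>

definition verts :: "nat \<Rightarrow> nat set" where
  "verts n = {1..n}"

definition Vmin :: "nat \<Rightarrow> nat set \<Rightarrow> nat set" where
  "Vmin n Vmax = verts n - Vmax"

definition game_graph :: "nat \<Rightarrow> (nat \<times> nat) set \<Rightarrow> nat set \<Rightarrow> bool" where
  "game_graph n E Vmax \<longleftrightarrow> E \<subseteq> verts n \<times> verts n \<and> Vmax \<subseteq> verts n
     \<and> (\<forall>i\<in>verts n. \<exists>j. (i, j) \<in> E)"

definition ergodic_eq ::
  "nat \<Rightarrow> (nat \<times> nat) set \<Rightarrow> nat set \<Rightarrow> (nat \<times> nat \<Rightarrow> real) \<Rightarrow> real \<Rightarrow> (nat \<Rightarrow> real) \<Rightarrow> bool" where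
  "ergodic_eq n E Vmax r lam u \<longleftrightarrow>
     (\<forall>i\<in>Vmax. lam + u i = Max {r (i, j) + u j | j. (i, j) \<in> E}) \<and>
     (\<forall>i\<in>Vmin n Vmax. lam + u i = Min {r (i, j) + u j | j. (i, j) \<in> E})"

definition is_bias :: "nat \<Rightarrow> (nat \<times> nat) set \<Rightarrow> nat set \<Rightarrow> (nat \<times> nat \<Rightarrow> real) \<Rightarrow> (nat \<Rightarrow> real) \<Rightarrow> bool" where
  "is_bias n E Vmax r u \<longleftrightarrow> (\<exists>lam. ergodic_eq n E Vmax r lam u)"

definition ergodic_graph :: "nat \<Rightarrow> (nat \<times> nat) set \<Rightarrow> nat set \<Rightarrow> bool" where
  "ergodic_graph n E Vmax \<longleftrightarrow> (\<forall>r. \<exists>lam u. ergodic_eq n E Vmax r lam u)"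

text \<open>A pair of (positional) policies; for definiteness they take the value 0
  (not a vertex) outside their domains, so that policies are identified with
  their restrictions to Vmax resp. Vmin.\<close>
definition policy_pair :: "nat \<Rightarrow> (nat \<times> nat) set \<Rightarrow> nat set \<Rightarrow> (nat \<Rightarrow> nat) \<Rightarrow> (nat \<Rightarrow> nat) \<Rightarrow> bool" where
  "policy_pair n E Vmax \<sigma> \<tau> \<longleftrightarrow>
     (\<forall>i\<in>Vmax. (i, \<sigma> i) \<in> E) \<and> (\<forall>i\<in>Vmin n Vmax. (i, \<tau> i) \<in> E) \<and>
     (\<forall>i. i \<notin> Vmax \<longrightarrow> \<sigma> i = 0) \<and> (\<forall>i. i \<notin> Vmin n Vmax \<longrightarrow> \<tau> i = 0)"

definition bias_induced ::
  "nat \<Rightarrow> (nat \<times> nat) set \<Rightarrow> nat set \<Rightarrow> (nat \<times> nat \<Rightarrow> real) \<Rightarrow> (nat \<Rightarrow> nat) \<Rightarrow> (nat \<Rightarrow> nat) \<Rightarrow> bool" where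
  "bias_induced n E Vmax r \<sigma> \<tau> \<longleftrightarrow> policy_pair n E Vmax \<sigma> \<tau> \<and>
     (\<exists>lam u. ergodic_eq n E Vmax r lam u \<and>
        (\<forall>i\<in>Vmax. r (i, \<sigma> i) + u (\<sigma> i) = Max {r (i, j) + u j | j. (i, j) \<in> E}) \<and>
        (\<forall>i\<in>Vmin n Vmax. r (i, \<tau> i) + u (\<tau> i) = Min {r (i, j) + u j | j. (i, j) \<in> E}))"

definition succ :: "nat set \<Rightarrow> (nat \<Rightarrow> nat) \<Rightarrow> (nat \<Rightarrow> nat) \<Rightarrow> nat \<Rightarrow> nat" where
  "succ Vmax \<sigma> \<tau> i = (if i \<in> Vmax then \<sigma> i else \<tau> i)"

definition cyclic_verts :: "nat set \<Rightarrow> (nat \<Rightarrow> nat) \<Rightarrow> nat set" where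
  "cyclic_verts V f = {i \<in> V. \<exists>k\<ge>1. (f ^^ k) i = i}"

definition orbit :: "(nat \<Rightarrow> nat) \<Rightarrow> nat \<Rightarrow> nat set" where
  "orbit f i = {(f ^^ k) i | k. True}"

definition cycles :: "nat set \<Rightarrow> (nat \<Rightarrow> nat) \<Rightarrow> nat set set" where
  "cycles V f = orbit f ` cyclic_verts V f"

definition Xi :: "nat \<Rightarrow> (nat \<times> nat) set \<Rightarrow> nat set \<Rightarrow> ((nat \<Rightarrow> nat) \<times> (nat \<Rightarrow> nat)) set" where
  "Xi n E Vmax = {(\<sigma>, \<tau>). policy_pair n E Vmax \<sigma> \<tau> \<and>
                   card (cycles (verts n) (succ Vmax \<sigma> \<tau>)) = 1}"

definition the_cycle :: "nat \<Rightarrow> nat set \<Rightarrow> (nat \<Rightarrow> nat) \<Rightarrow> (nat \<Rightarrow> nat) \<Rightarrow> nat set" where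
  "the_cycle n Vmax \<sigma> \<tau> = (THE C. C \<in> cycles (verts n) (succ Vmax \<sigma> \<tau>))"

definition lam_pol :: "nat \<Rightarrow> nat set \<Rightarrow> (nat \<Rightarrow> nat) \<Rightarrow> (nat \<Rightarrow> nat) \<Rightarrow> (nat \<times> nat \<Rightarrow> real) \<Rightarrow> real" where
  "lam_pol n Vmax \<sigma> \<tau> r =
     (let C = the_cycle n Vmax \<sigma> \<tau>; f = succ Vmax \<sigma> \<tau>
      in (\<Sum>i\<in>C. r (i, f i)) / real (card C))"

definition u_pol :: "nat \<Rightarrow> nat set \<Rightarrow> (nat \<Rightarrow> nat) \<Rightarrow> (nat \<Rightarrow> nat) \<Rightarrow> (nat \<times> nat \<Rightarrow> real) \<Rightarrow> nat \<Rightarrow> real" where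
  "u_pol n Vmax \<sigma> \<tau> r l =
     (let f = succ Vmax \<sigma> \<tau>; m = Min (the_cycle n Vmax \<sigma> \<tau>);
          k = (LEAST k. (f ^^ k) l = m); lam = lam_pol n Vmax \<sigma> \<tau> r
      in (\<Sum>t<k. r ((f ^^ t) l, (f ^^ Suc t) l) - lam))"

definition P_pol :: "nat \<Rightarrow> (nat \<times> nat) set \<Rightarrow> nat set \<Rightarrow> (nat \<Rightarrow> nat) \<Rightarrow> (nat \<Rightarrow> nat) \<Rightarrow> (nat \<times> nat \<Rightarrow> real) set" where
  "P_pol n E Vmax \<sigma> \<tau> = {r. \<forall>\<sigma>' \<tau>'. bias_induced n E Vmax r \<sigma>' \<tau>' \<longleftrightarrow> (\<sigma>', \<tau>') = (\<sigma>, \<tau>)}"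

definition U_set :: "nat \<Rightarrow> (nat \<times> nat) set \<Rightarrow> nat set \<Rightarrow> (nat \<times> nat \<Rightarrow> real) set" where
  "U_set n E Vmax = (\<Union>(\<sigma>, \<tau>)\<in>Xi n E Vmax. P_pol n E Vmax \<sigma> \<tau>)"

definition Z :: "nat \<Rightarrow> (nat \<times> nat) set \<Rightarrow> nat set \<Rightarrow> (nat \<times> nat \<Rightarrow> real) \<Rightarrow> nat \<Rightarrow> nat \<Rightarrow> real" where
  "Z n E Vmax r i j =
    (if i \<in> Vmin n Vmax then
       Inf {x. r((i, j) := x) \<in> U_set n E Vmax \<and>
               (\<exists>\<sigma>' \<tau>'. (\<sigma>', \<tau>') \<in> Xi n E Vmax \<and> bias_induced n E Vmax (r((i, j) := x)) \<sigma>' \<tau>' \<and> \<tau>' i \<noteq> j)}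
     else
       Sup {x. r((i, j) := x) \<in> U_set n E Vmax \<and>
               (\<exists>\<sigma>' \<tau>'. (\<sigma>', \<tau>') \<in> Xi n E Vmax \<and> bias_induced n E Vmax (r((i, j) := x)) \<sigma>' \<tau>' \<and> \<sigma>' i \<noteq> j)})"

end

theory Submission
  imports Defs
begin

(*
  Being bias-induced is a system of linear inequalities in (lambda, u), tight along sigma and tau.
  If r is in P^{sigma,tau}, some solution u is strict off the policy edges, since a tie would let a
  player switch while u stays a bias.  Conversely strictness gives back r in P^{sigma,tau}: for any
  other solution u', the argmax and the argmin of u - u' are closed under the successor map of
  (sigma, tau), so both contain its unique cycle and u - u' is constant.  Along (sigma, tau) every
  solution telescopes to lambda^{sigma,tau} and u^{sigma,tau} up to a constant.

  At a Max vertex i put T = lambda + u(i) - u(j).  A weight x < T on the edge (i,j) keeps u strict.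
  For x > r(i,j), a pair avoiding (i,j) that is bias-induced at x is bias-induced already at r,
  hence equals (sigma, tau), whose inequality at (i,j) gives x <= T.  So Z_ij = T.  Min vertices
  reduce to Max vertices by swapping the players and negating the weights.
*)

section \<open>Functional graphs with a unique cycle\<close>

lemma funpow_mem: "f ` A \<subseteq> A \<Longrightarrow> a \<in> A \<Longrightarrow> (f ^^ k) a \<in> A"
  by (induction k) auto

lemma periodic_point_in_invariant_set:
  assumes fin: "finite A" and inv: "f ` A \<subseteq> A" and a: "a \<in> A"
  shows "\<exists>c\<in>A. \<exists>p\<ge>1. (f ^^ p) c = c"
proof -
  let ?g = "\<lambda>t. (f ^^ t) a"
  have "\<not> inj_on ?g {0..card A}"
  proof
    assume "inj_on ?g {0..card A}"
    then have "card {0..card A} \<le> card A"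
      using card_inj_on_le[of ?g _ A] funpow_mem[OF inv a] fin by blast
    then show False by simp
  qed
  then obtain x y where "x \<noteq> y" "?g x = ?g y"
    unfolding inj_on_def by blast
  then obtain s t where st: "s < t" "?g s = ?g t"
    by (metis linorder_neqE_nat)
  have "(f ^^ (t - s)) (?g s) = (f ^^ (t - s + s)) a"
    by (simp add: funpow_add)
  with st have "(f ^^ (t - s)) (?g s) = ?g s"
    by simp
  then show ?thesis
    using st(1) funpow_mem[OF inv a] by (intro bexI[of _ "?g s"] exI[of _ "t - s"]) auto
qed

lemma orbit_subset: "f ` A \<subseteq> A \<Longrightarrow> c \<in> A \<Longrightarrow> orbit f c \<subseteq> A"
  unfolding orbit_def using funpow_mem[of f A c] by auto

lemma image_orbit_subset: "f ` orbit f c \<subseteq> orbit f c"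
proof
  fix x assume "x \<in> f ` orbit f c"
  then obtain k where "x = (f ^^ Suc k) c" unfolding orbit_def by auto
  then show "x \<in> orbit f c" unfolding orbit_def by blast
qed

lemma mem_orbit_self: "c \<in> orbit f c"
  unfolding orbit_def by (auto intro!: exI[of _ 0])

lemma image_orbit_periodic:
  assumes "p \<ge> 1" "(f ^^ p) c = c"
  shows "f ` orbit f c = orbit f c"
proof
  show "orbit f c \<subseteq> f ` orbit f c"
  proof
    fix x assume "x \<in> orbit f c"
    then obtain k where "x = (f ^^ k) c" unfolding orbit_def by blast
    moreover have "k + p = Suc (k + p - 1)"
      using assms(1) by simp
    ultimately have "x = (f ^^ Suc (k + p - 1)) c"
      using assms(2) by (metis comp_apply funpow_add)
    then have "x = f ((f ^^ (k + p - 1)) c)"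
      by simp
    then show "x \<in> f ` orbit f c" unfolding orbit_def by blast
  qed
qed (rule image_orbit_subset)

lemma unique_cycle_subset:
  assumes "finite V" "cycles V f = {C}" "A \<subseteq> V" "f ` A \<subseteq> A" "a \<in> A"
  shows "C \<subseteq> A"
proof -
  obtain c p where c: "c \<in> A" "p \<ge> 1" "(f ^^ p) c = c"
    using periodic_point_in_invariant_set[OF finite_subset[OF assms(3,1)] assms(4,5)] by blast
  then have "orbit f c \<in> cycles V f"
    using assms(3) unfolding cycles_def cyclic_verts_def by blast
  then show ?thesis
    using assms(2) orbit_subset[OF assms(4) c(1)] by blast
qed

lemma unique_cycle:
  assumes "finite V" "f ` V \<subseteq> V" "cycles V f = {C}"
  shows "finite C" "C \<noteq> {}" "C \<subseteq> V" "f ` C = C"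
proof -
  have "C \<in> orbit f ` cyclic_verts V f"
    using assms(3) unfolding cycles_def by blast
  then obtain c p where "c \<in> V" "p \<ge> 1" "(f ^^ p) c = c" "C = orbit f c"
    unfolding cyclic_verts_def by blast
  then show "C \<subseteq> V" "C \<noteq> {}" "f ` C = C"
    using orbit_subset[OF assms(2)] mem_orbit_self image_orbit_periodic by blast+
  then show "finite C"
    using assms(1) finite_subset by blast
qed

lemma cSup_eq_between:
  fixes t :: "'a::{conditionally_complete_linorder, no_bot, dense_linorder}"
  assumes "{..<t} \<subseteq> S" "S \<subseteq> {..t}"
  shows "Sup S = t"
proof (rule order.antisym)
  show "Sup S \<le> t"
    using assms cSup_subset_mono[of S "{..t}"] by fastforce
  show "t \<le> Sup S"
    using assms cSup_subset_mono[of "{..<t}" S] bdd_above_mono[of "{..t}" S] by simp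
qed

lemma finite_ex_argmax:
  fixes f :: "'a \<Rightarrow> 'b::linorder"
  assumes "finite A" "A \<noteq> {}"
  obtains k where "k \<in> A" "\<forall>l\<in>A. f l \<le> f k"
proof -
  have "Max (f ` A) \<in> f ` A"
    using assms by simp
  then obtain k where "k \<in> A" "f k = Max (f ` A)"
    by (metis imageE)
  then show thesis
    using that assms by simp
qed

lemma eq_Max_attained_iff:
  fixes g :: "'a \<Rightarrow> 'b::linorder"
  assumes "finite {l. P l}" "P s"
  shows "m = Max {g l | l. P l} \<and> g s = Max {g l | l. P l} \<longleftrightarrow> (\<forall>l. P l \<longrightarrow> g l \<le> m) \<and> g s = m"
proof -
  have "{g l | l. P l} = g ` {l. P l}" by blast
  then show ?thesis
    using assms eq_Max_iff[of "g ` {l. P l}" m] by auto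
qed

lemma eq_Min_attained_iff:
  fixes g :: "'a \<Rightarrow> 'b::linorder"
  assumes "finite {l. P l}" "P s"
  shows "m = Min {g l | l. P l} \<and> g s = Min {g l | l. P l} \<longleftrightarrow> (\<forall>l. P l \<longrightarrow> m \<le> g l) \<and> g s = m"
proof -
  have "{g l | l. P l} = g ` {l. P l}" by blast
  then show ?thesis
    using assms eq_Min_iff[of "g ` {l. P l}" m] by auto
qed

lemma neg_sum_compare:
  fixes a b c d :: "'a::linordered_ab_group_add"
  shows "- a - b \<le> - c - d \<longleftrightarrow> c + d \<le> a + b" "- a - b < - c - d \<longleftrightarrow> c + d < a + b"
    "- a - b = - c - d \<longleftrightarrow> a + b = c + d"
  by (simp_all add: algebra_simps minus_add[symmetric] del: minus_add) (rule eq_commute)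

section \<open>Biases as solutions of linear inequalities\<close>

definition policy_bias ::
  "nat \<Rightarrow> (nat \<times> nat) set \<Rightarrow> nat set \<Rightarrow> (nat \<times> nat \<Rightarrow> real) \<Rightarrow> (nat \<Rightarrow> nat) \<Rightarrow> (nat \<Rightarrow> nat)
    \<Rightarrow> real \<Rightarrow> (nat \<Rightarrow> real) \<Rightarrow> bool" where
  "policy_bias n E Vmax r \<sigma> \<tau> lam u \<longleftrightarrow>
     (\<forall>k\<in>Vmax. (\<forall>l. (k, l) \<in> E \<longrightarrow> r (k, l) + u l \<le> lam + u k) \<and> r (k, \<sigma> k) + u (\<sigma> k) = lam + u k) \<and>
     (\<forall>k\<in>Vmin n Vmax. (\<forall>l. (k, l) \<in> E \<longrightarrow> lam + u k \<le> r (k, l) + u l) \<and> r (k, \<tau> k) + u (\<tau> k) = lam + u k)"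

definition strict_policy_bias ::
  "nat \<Rightarrow> (nat \<times> nat) set \<Rightarrow> nat set \<Rightarrow> (nat \<times> nat \<Rightarrow> real) \<Rightarrow> (nat \<Rightarrow> nat) \<Rightarrow> (nat \<Rightarrow> nat)
    \<Rightarrow> real \<Rightarrow> (nat \<Rightarrow> real) \<Rightarrow> bool" where
  "strict_policy_bias n E Vmax r \<sigma> \<tau> lam u \<longleftrightarrow> policy_bias n E Vmax r \<sigma> \<tau> lam u \<and>
     (\<forall>k\<in>Vmax. \<forall>l. (k, l) \<in> E \<and> l \<noteq> \<sigma> k \<longrightarrow> r (k, l) + u l < lam + u k) \<and>
     (\<forall>k\<in>Vmin n Vmax. \<forall>l. (k, l) \<in> E \<and> l \<noteq> \<tau> k \<longrightarrow> lam + u k < r (k, l) + u l)"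

lemma finite_verts: "finite (verts n)"
  by (simp add: verts_def)

lemma cycles_Xi:
  "(\<sigma>, \<tau>) \<in> Xi n E Vmax \<Longrightarrow> cycles (verts n) (succ Vmax \<sigma> \<tau>) = {the_cycle n Vmax \<sigma> \<tau>}"
proof -
  assume "(\<sigma>, \<tau>) \<in> Xi n E Vmax"
  then have "card (cycles (verts n) (succ Vmax \<sigma> \<tau>)) = 1"
    unfolding Xi_def by simp
  then obtain C where "cycles (verts n) (succ Vmax \<sigma> \<tau>) = {C}"
    by (rule card_1_singletonE)
  then show ?thesis
    unfolding the_cycle_def by simp
qed

lemma mem_U_set_iff:
  "r \<in> U_set n E Vmax \<longleftrightarrow> (\<exists>\<sigma> \<tau>. (\<sigma>, \<tau>) \<in> Xi n E Vmax \<and> r \<in> P_pol n E Vmax \<sigma> \<tau>)"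
  unfolding U_set_def by blast

lemma policy_bias_succ:
  assumes "policy_bias n E Vmax r \<sigma> \<tau> lam u" "k \<in> verts n"
  shows "lam + u k = r (k, succ Vmax \<sigma> \<tau> k) + u (succ Vmax \<sigma> \<tau> k)"
  using assms unfolding policy_bias_def succ_def Vmin_def by auto

locale game =
  fixes n :: nat and E :: "(nat \<times> nat) set" and Vmax :: "nat set"
  assumes game_graph: "game_graph n E Vmax"
begin

lemma edge_verts: "(k, l) \<in> E \<Longrightarrow> k \<in> verts n \<and> l \<in> verts n"
  using game_graph unfolding game_graph_def by auto

lemma Vmax_subset_verts: "Vmax \<subseteq> verts n"
  using game_graph unfolding game_graph_def by auto

lemma finite_successors: "finite {l. (k, l) \<in> E}"
  using edge_verts by (intro finite_subset[OF _ finite_atLeastAtMost[of 1 n]]) (auto simp: verts_def)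

lemma bias_induced_iff:
  "bias_induced n E Vmax r \<sigma> \<tau> \<longleftrightarrow>
     policy_pair n E Vmax \<sigma> \<tau> \<and> (\<exists>lam u. policy_bias n E Vmax r \<sigma> \<tau> lam u)"
proof -
  have "ergodic_eq n E Vmax r lam u \<and>
        (\<forall>k\<in>Vmax. r (k, \<sigma> k) + u (\<sigma> k) = Max {r (k, l) + u l | l. (k, l) \<in> E}) \<and>
        (\<forall>k\<in>Vmin n Vmax. r (k, \<tau> k) + u (\<tau> k) = Min {r (k, l) + u l | l. (k, l) \<in> E})
        \<longleftrightarrow> policy_bias n E Vmax r \<sigma> \<tau> lam u"
    if pp: "policy_pair n E Vmax \<sigma> \<tau>" for lam u
  proof -
    have "lam + u k = Max {r (k, l) + u l | l. (k, l) \<in> E} \<and>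
          r (k, \<sigma> k) + u (\<sigma> k) = Max {r (k, l) + u l | l. (k, l) \<in> E}
          \<longleftrightarrow> (\<forall>l. (k, l) \<in> E \<longrightarrow> r (k, l) + u l \<le> lam + u k) \<and> r (k, \<sigma> k) + u (\<sigma> k) = lam + u k"
      if "k \<in> Vmax" for k
      using that pp unfolding policy_pair_def by (intro eq_Max_attained_iff finite_successors) auto
    moreover have "lam + u k = Min {r (k, l) + u l | l. (k, l) \<in> E} \<and>
          r (k, \<tau> k) + u (\<tau> k) = Min {r (k, l) + u l | l. (k, l) \<in> E}
          \<longleftrightarrow> (\<forall>l. (k, l) \<in> E \<longrightarrow> lam + u k \<le> r (k, l) + u l) \<and> r (k, \<tau> k) + u (\<tau> k) = lam + u k"
      if "k \<in> Vmin n Vmax" for k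
      using that pp unfolding policy_pair_def by (intro eq_Min_attained_iff finite_successors) auto
    ultimately show ?thesis
      unfolding ergodic_eq_def policy_bias_def by blast
  qed
  then show ?thesis
    unfolding bias_induced_def by blast
qed

lemma succ_edge:
  assumes "policy_pair n E Vmax \<sigma> \<tau>" "k \<in> verts n"
  shows "(k, succ Vmax \<sigma> \<tau> k) \<in> E"
  using assms unfolding policy_pair_def succ_def Vmin_def by auto

lemma succ_verts_subset: "policy_pair n E Vmax \<sigma> \<tau> \<Longrightarrow> succ Vmax \<sigma> \<tau> ` verts n \<subseteq> verts n"
  using succ_edge edge_verts by blast

lemma the_cycle_Xi:
  assumes "(\<sigma>, \<tau>) \<in> Xi n E Vmax"
  shows "finite (the_cycle n Vmax \<sigma> \<tau>)" "the_cycle n Vmax \<sigma> \<tau> \<noteq> {}"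
    "the_cycle n Vmax \<sigma> \<tau> \<subseteq> verts n" "succ Vmax \<sigma> \<tau> ` the_cycle n Vmax \<sigma> \<tau> = the_cycle n Vmax \<sigma> \<tau>"
proof -
  have "policy_pair n E Vmax \<sigma> \<tau>"
    using assms unfolding Xi_def by simp
  then show "finite (the_cycle n Vmax \<sigma> \<tau>)" "the_cycle n Vmax \<sigma> \<tau> \<noteq> {}"
    "the_cycle n Vmax \<sigma> \<tau> \<subseteq> verts n" "succ Vmax \<sigma> \<tau> ` the_cycle n Vmax \<sigma> \<tau> = the_cycle n Vmax \<sigma> \<tau>"
    using unique_cycle[OF finite_verts succ_verts_subset cycles_Xi[OF assms]] by blast+
qed

lemma lam_pol_eq:
  assumes xi: "(\<sigma>, \<tau>) \<in> Xi n E Vmax"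
    and pot: "\<forall>k\<in>verts n. lam + u k = r (k, succ Vmax \<sigma> \<tau> k) + u (succ Vmax \<sigma> \<tau> k)"
  shows "lam_pol n Vmax \<sigma> \<tau> r = lam"
proof -
  let ?f = "succ Vmax \<sigma> \<tau>" and ?C = "the_cycle n Vmax \<sigma> \<tau>"
  note C = the_cycle_Xi[OF xi]
  have "inj_on ?f ?C"
    using C(1,4) by (simp add: eq_card_imp_inj_on)
  then have "(\<Sum>k\<in>?C. u (?f k)) = (\<Sum>k\<in>?C. u k)"
    using sum.reindex[of ?f ?C u] C(4) by simp
  moreover have "(\<Sum>k\<in>?C. r (k, ?f k)) = (\<Sum>k\<in>?C. lam + u k - u (?f k))"
    using pot C(3) by (intro sum.cong) auto
  ultimately have "(\<Sum>k\<in>?C. r (k, ?f k)) = card ?C * lam"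
    by (simp add: sum.distrib sum_subtractf)
  then show ?thesis
    using C(1,2) unfolding lam_pol_def Let_def by simp
qed

lemma u_pol_eq:
  assumes xi: "(\<sigma>, \<tau>) \<in> Xi n E Vmax"
    and pot: "\<forall>k\<in>verts n. lam + u k = r (k, succ Vmax \<sigma> \<tau> k) + u (succ Vmax \<sigma> \<tau> k)"
    and l: "l \<in> verts n"
  shows "u_pol n Vmax \<sigma> \<tau> r l = u l - u (Min (the_cycle n Vmax \<sigma> \<tau>))"
proof -
  let ?f = "succ Vmax \<sigma> \<tau>" and ?m = "Min (the_cycle n Vmax \<sigma> \<tau>)"
  have pp: "policy_pair n E Vmax \<sigma> \<tau>"
    using xi unfolding Xi_def by simp
  have "the_cycle n Vmax \<sigma> \<tau> \<subseteq> orbit ?f l"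
    using unique_cycle_subset[OF _ cycles_Xi[OF xi] orbit_subset[OF succ_verts_subset[OF pp] l]
        image_orbit_subset mem_orbit_self] finite_verts
    by blast
  then have "?m \<in> orbit ?f l"
    using the_cycle_Xi(1,2)[OF xi] Min_in by blast
  then have "\<exists>k. (?f ^^ k) l = ?m"
    unfolding orbit_def by auto
  then have K: "(?f ^^ (LEAST k. (?f ^^ k) l = ?m)) l = ?m"
    by (rule LeastI_ex)
  have "r ((?f ^^ t) l, (?f ^^ Suc t) l) - lam = u ((?f ^^ t) l) - u ((?f ^^ Suc t) l)" for t
    using pot[rule_format, OF funpow_mem[OF succ_verts_subset[OF pp] l, of t]] by simp
  then have "u_pol n Vmax \<sigma> \<tau> r l = (\<Sum>t<(LEAST k. (?f ^^ k) l = ?m). u ((?f ^^ t) l) - u ((?f ^^ Suc t) l))"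
    unfolding u_pol_def Let_def lam_pol_eq[OF xi pot] by simp
  also have "\<dots> = u l - u ?m"
    using sum_lessThan_telescope'[of "\<lambda>t. u ((?f ^^ t) l)"] K by simp
  finally show ?thesis .
qed

lemma lam_pol_u_pol_difference:
  assumes xi: "(\<sigma>, \<tau>) \<in> Xi n E Vmax" and bias: "policy_bias n E Vmax r' \<sigma> \<tau> lam u"
    and agree: "\<forall>k\<in>verts n. r' (k, succ Vmax \<sigma> \<tau> k) = r (k, succ Vmax \<sigma> \<tau> k)"
    and "i \<in> verts n" "j \<in> verts n"
  shows "lam_pol n Vmax \<sigma> \<tau> r + u_pol n Vmax \<sigma> \<tau> r i - u_pol n Vmax \<sigma> \<tau> r j = lam + u i - u j"
proof -
  have "\<forall>k\<in>verts n. lam + u k = r (k, succ Vmax \<sigma> \<tau> k) + u (succ Vmax \<sigma> \<tau> k)"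
    using policy_bias_succ[OF bias] agree by simp
  then show ?thesis
    using lam_pol_eq[OF xi] u_pol_eq[OF xi] assms(4,5) by simp
qed

section \<open>Swapping the players\<close>

lemma succ_dual:
  "policy_pair n E Vmax \<sigma> \<tau> \<Longrightarrow> succ (Vmin n Vmax) \<tau> \<sigma> = succ Vmax \<sigma> \<tau>"
  unfolding policy_pair_def succ_def Vmin_def by auto

lemma the_cycle_dual:
  "policy_pair n E Vmax \<sigma> \<tau> \<Longrightarrow> the_cycle n (Vmin n Vmax) \<tau> \<sigma> = the_cycle n Vmax \<sigma> \<tau>"
  unfolding the_cycle_def by (simp add: succ_dual)

lemma lam_pol_dual:
  "policy_pair n E Vmax \<sigma> \<tau> \<Longrightarrow> lam_pol n (Vmin n Vmax) \<tau> \<sigma> (- r) = - lam_pol n Vmax \<sigma> \<tau> r"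
  unfolding lam_pol_def Let_def by (simp add: succ_dual the_cycle_dual sum_negf)

lemma u_pol_dual:
  "policy_pair n E Vmax \<sigma> \<tau> \<Longrightarrow> u_pol n (Vmin n Vmax) \<tau> \<sigma> (- r) l = - u_pol n Vmax \<sigma> \<tau> r l"
  unfolding u_pol_def Let_def by (simp add: succ_dual the_cycle_dual lam_pol_dual flip: sum_negf)

lemma Vmin_Vmin [simp]: "Vmin n (Vmin n Vmax) = Vmax"
  using Vmax_subset_verts unfolding Vmin_def by blast

lemma dual_game: "game n E (Vmin n Vmax)"
  using game_graph unfolding game_def game_graph_def Vmin_def by auto

lemma policy_pair_dual: "policy_pair n E (Vmin n Vmax) \<tau> \<sigma> \<longleftrightarrow> policy_pair n E Vmax \<sigma> \<tau>"
  unfolding policy_pair_def by auto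

lemma policy_bias_dual:
  "policy_bias n E (Vmin n Vmax) (- r) \<tau> \<sigma> (- lam) (- u) \<longleftrightarrow> policy_bias n E Vmax r \<sigma> \<tau> lam u"
  unfolding policy_bias_def by (auto simp: neg_sum_compare)

lemma strict_policy_bias_dual:
  "strict_policy_bias n E (Vmin n Vmax) (- r) \<tau> \<sigma> (- lam) (- u) \<longleftrightarrow> strict_policy_bias n E Vmax r \<sigma> \<tau> lam u"
  unfolding strict_policy_bias_def policy_bias_dual by (auto simp: neg_sum_compare)

lemma bias_induced_dual:
  "bias_induced n E (Vmin n Vmax) (- r) \<tau> \<sigma> \<longleftrightarrow> bias_induced n E Vmax r \<sigma> \<tau>"
proof -
  interpret dual: game n E "Vmin n Vmax"
    by (rule dual_game)
  have "(\<exists>lam u. policy_bias n E (Vmin n Vmax) (- r) \<tau> \<sigma> lam u) \<longleftrightarrow> (\<exists>lam u. policy_bias n E Vmax r \<sigma> \<tau> lam u)"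
  proof
    assume "\<exists>lam u. policy_bias n E (Vmin n Vmax) (- r) \<tau> \<sigma> lam u"
    then obtain lam u where "policy_bias n E (Vmin n Vmax) (- r) \<tau> \<sigma> lam u"
      by blast
    then have "policy_bias n E (Vmin n Vmax) (- r) \<tau> \<sigma> (- (- lam)) (- (- u))"
      by (simp add: fun_Compl_def)
    then show "\<exists>lam u. policy_bias n E Vmax r \<sigma> \<tau> lam u"
      unfolding policy_bias_dual by blast
  next
    assume "\<exists>lam u. policy_bias n E Vmax r \<sigma> \<tau> lam u"
    then show "\<exists>lam u. policy_bias n E (Vmin n Vmax) (- r) \<tau> \<sigma> lam u"
      unfolding policy_bias_dual[symmetric] by blast
  qed
  then show ?thesis
    using bias_induced_iff dual.bias_induced_iff policy_pair_dual by simp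
qed

lemma Xi_dual: "(\<tau>, \<sigma>) \<in> Xi n E (Vmin n Vmax) \<longleftrightarrow> (\<sigma>, \<tau>) \<in> Xi n E Vmax"
  unfolding Xi_def using policy_pair_dual succ_dual by fastforce

lemma P_pol_dual: "- r \<in> P_pol n E (Vmin n Vmax) \<tau> \<sigma> \<longleftrightarrow> r \<in> P_pol n E Vmax \<sigma> \<tau>"
proof -
  have "(\<forall>\<sigma>' \<tau>'. bias_induced n E Vmax r \<tau>' \<sigma>' \<longleftrightarrow> (\<sigma>', \<tau>') = (\<tau>, \<sigma>))
      \<longleftrightarrow> (\<forall>\<tau>' \<sigma>'. bias_induced n E Vmax r \<tau>' \<sigma>' \<longleftrightarrow> (\<tau>', \<sigma>') = (\<sigma>, \<tau>))"
    by blast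
  then show ?thesis
    unfolding P_pol_def by (simp add: bias_induced_dual)
qed

lemma U_set_dual: "- r \<in> U_set n E (Vmin n Vmax) \<longleftrightarrow> r \<in> U_set n E Vmax"
  unfolding mem_U_set_iff by (simp add: Xi_dual P_pol_dual) blast

lemma Z_dual:
  assumes "i \<in> Vmin n Vmax"
  shows "Z n E Vmax r i j = - Z n E (Vmin n Vmax) (- r) i j"
proof -
  define S where "S = {x. r((i, j) := x) \<in> U_set n E Vmax \<and>
    (\<exists>\<sigma>' \<tau>'. (\<sigma>', \<tau>') \<in> Xi n E Vmax \<and> bias_induced n E Vmax (r((i, j) := x)) \<sigma>' \<tau>' \<and> \<tau>' i \<noteq> j)}"
  have upd: "(- r)((i, j) := x) = - (r((i, j) := - x))" for x
    by (simp add: fun_eq_iff)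
  have "{x. (- r)((i, j) := x) \<in> U_set n E (Vmin n Vmax) \<and>
      (\<exists>\<sigma>' \<tau>'. (\<sigma>', \<tau>') \<in> Xi n E (Vmin n Vmax) \<and>
         bias_induced n E (Vmin n Vmax) ((- r)((i, j) := x)) \<sigma>' \<tau>' \<and> \<sigma>' i \<noteq> j)} = {x. - x \<in> S}"
    unfolding S_def upd by (simp add: U_set_dual bias_induced_dual Xi_dual) blast
  also have "\<dots> = uminus ` S"
    by (force simp: image_iff)
  finally show ?thesis
    using assms unfolding Z_def S_def by (simp add: Vmin_def Inf_real_def)
qed

section \<open>Strict biases and uniqueness of the induced pair\<close>

lemma P_pol_strict_at_Max:
  assumes P: "r \<in> P_pol n E Vmax \<sigma> \<tau>" and bias: "policy_bias n E Vmax r \<sigma> \<tau> lam u"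
    and k: "k \<in> Vmax" and kl: "(k, l) \<in> E" and l: "l \<noteq> \<sigma> k"
  shows "r (k, l) + u l < lam + u k"
proof (rule ccontr)
  assume "\<not> ?thesis"
  then have tie: "r (k, l) + u l = lam + u k"
    using bias k kl unfolding policy_bias_def by force
  have "policy_pair n E Vmax \<sigma> \<tau>"
    using P bias_induced_iff unfolding P_pol_def by blast
  then have "policy_pair n E Vmax (\<sigma>(k := l)) \<tau>"
    using k kl unfolding policy_pair_def by auto
  moreover have "policy_bias n E Vmax r (\<sigma>(k := l)) \<tau> lam u"
    using bias tie unfolding policy_bias_def by auto
  ultimately have "bias_induced n E Vmax r (\<sigma>(k := l)) \<tau>"
    using bias_induced_iff by blast
  then have "\<sigma>(k := l) = \<sigma>"
    using P unfolding P_pol_def by blast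
  then show False
    using l by (metis fun_upd_same)
qed

lemma strict_policy_bias_of_P_pol:
  assumes P: "r \<in> P_pol n E Vmax \<sigma> \<tau>"
  obtains lam u where "strict_policy_bias n E Vmax r \<sigma> \<tau> lam u"
proof -
  interpret dual: game n E "Vmin n Vmax"
    by (rule dual_game)
  have "bias_induced n E Vmax r \<sigma> \<tau>"
    using P unfolding P_pol_def by blast
  then obtain lam u where bias: "policy_bias n E Vmax r \<sigma> \<tau> lam u"
    using bias_induced_iff by blast
  have "lam + u k < r (k, l) + u l" if "k \<in> Vmin n Vmax" "(k, l) \<in> E" "l \<noteq> \<tau> k" for k l
    using dual.P_pol_strict_at_Max[of "- r" \<tau> \<sigma> "- lam" "- u" k l] P bias that
    by (simp add: P_pol_dual policy_bias_dual neg_sum_compare)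
  then show thesis
    using that bias P_pol_strict_at_Max[OF P bias] unfolding strict_policy_bias_def by blast
qed

lemma policy_pair_mixed:
  "policy_pair n E Vmax \<sigma> \<tau> \<Longrightarrow> policy_pair n E Vmax \<sigma>' \<tau>' \<Longrightarrow> policy_pair n E Vmax \<sigma> \<tau>'"
  unfolding policy_pair_def by blast

lemma policy_bias_mixed_step:
  assumes pp: "policy_pair n E Vmax \<sigma> \<tau>" and bias: "policy_bias n E Vmax r \<sigma> \<tau> lam u"
    and pp': "policy_pair n E Vmax \<sigma>' \<tau>'" and bias': "policy_bias n E Vmax r \<sigma>' \<tau>' lam' u'"
    and k: "k \<in> verts n"
  shows "lam + u k - u' k \<le> lam' + u (succ Vmax \<sigma> \<tau>' k) - u' (succ Vmax \<sigma> \<tau>' k)"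
proof (cases "k \<in> Vmax")
  case True
  then have "(k, \<sigma> k) \<in> E"
    using pp unfolding policy_pair_def by blast
  then have "lam + u k = r (k, \<sigma> k) + u (\<sigma> k)" "r (k, \<sigma> k) + u' (\<sigma> k) \<le> lam' + u' k"
    using True bias bias' unfolding policy_bias_def by auto
  then show ?thesis
    using True unfolding succ_def by simp
next
  case False
  then have Min: "k \<in> Vmin n Vmax"
    using k unfolding Vmin_def by blast
  then have "(k, \<tau>' k) \<in> E"
    using pp' unfolding policy_pair_def by blast
  then have "lam + u k \<le> r (k, \<tau>' k) + u (\<tau>' k)" "r (k, \<tau>' k) + u' (\<tau>' k) = lam' + u' k"
    using Min bias bias' unfolding policy_bias_def by auto
  then show ?thesis
    using False unfolding succ_def by simp
qed

lemma policy_bias_value_unique: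
  assumes "policy_pair n E Vmax \<sigma> \<tau>" "policy_bias n E Vmax r \<sigma> \<tau> lam u"
    and "policy_pair n E Vmax \<sigma>' \<tau>'" "policy_bias n E Vmax r \<sigma>' \<tau>' lam' u'"
    and "verts n \<noteq> {}"
  shows "lam = lam'"
proof -
  have "lam \<le> lam'"
    if "policy_pair n E Vmax \<sigma> \<tau>" "policy_bias n E Vmax r \<sigma> \<tau> lam u"
      "policy_pair n E Vmax \<sigma>' \<tau>'" "policy_bias n E Vmax r \<sigma>' \<tau>' lam' u'"
    for \<sigma> \<tau> lam u \<sigma>' \<tau>' lam' u'
  proof -
    obtain k where k: "k \<in> verts n" "\<forall>l\<in>verts n. u l - u' l \<le> u k - u' k"
      by (rule finite_ex_argmax[OF finite_verts assms(5)])
    have "succ Vmax \<sigma> \<tau>' k \<in> verts n"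
      using succ_verts_subset[OF policy_pair_mixed[OF that(1,3)]] k(1) by blast
    then have "u (succ Vmax \<sigma> \<tau>' k) - u' (succ Vmax \<sigma> \<tau>' k) \<le> u k - u' k"
      using k(2) by blast
    then show ?thesis
      using policy_bias_mixed_step[OF that k(1)] by linarith
  qed
  from this[OF assms(1-4)] this[OF assms(3,4,1,2)] show ?thesis
    by linarith
qed

(* On the argmax of u - u' the mixed step is an equality; at a Min vertex strictness then forces
   the successor under tau' to be the one under tau. *)
lemma argmax_bias_diff_invariant:
  assumes pp: "policy_pair n E Vmax \<sigma> \<tau>" and strict: "strict_policy_bias n E Vmax r \<sigma> \<tau> lam u"
    and pp': "policy_pair n E Vmax \<sigma>' \<tau>'" and bias': "policy_bias n E Vmax r \<sigma>' \<tau>' lam u'"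
  shows "succ Vmax \<sigma> \<tau> ` {k \<in> verts n. \<forall>l\<in>verts n. u l - u' l \<le> u k - u' k}
           \<subseteq> {k \<in> verts n. \<forall>l\<in>verts n. u l - u' l \<le> u k - u' k}"
proof (rule image_subsetI)
  fix k assume "k \<in> {k \<in> verts n. \<forall>l\<in>verts n. u l - u' l \<le> u k - u' k}"
  then have k: "k \<in> verts n" and max: "\<forall>l\<in>verts n. u l - u' l \<le> u k - u' k"
    by auto
  let ?g = "succ Vmax \<sigma> \<tau>'"
  have bias: "policy_bias n E Vmax r \<sigma> \<tau> lam u"
    using strict unfolding strict_policy_bias_def by simp
  have gk: "?g k \<in> verts n"
    using succ_verts_subset[OF policy_pair_mixed[OF pp pp']] k by blast
  have eq: "u (?g k) - u' (?g k) = u k - u' k"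
    using policy_bias_mixed_step[OF pp bias pp' bias' k] max[rule_format, OF gk] by linarith
  have "succ Vmax \<sigma> \<tau> k = ?g k"
  proof (cases "k \<in> Vmax")
    case False
    then have Min: "k \<in> Vmin n Vmax"
      using k unfolding Vmin_def by blast
    then have edge: "(k, \<tau>' k) \<in> E"
      using pp' unfolding policy_pair_def by blast
    have "lam + u' k = r (k, \<tau>' k) + u' (\<tau>' k)"
      using bias' Min unfolding policy_bias_def by simp
    then have "lam + u k = r (k, \<tau>' k) + u (\<tau>' k)"
      using eq False unfolding succ_def by simp
    then have "\<tau>' k = \<tau> k"
      using strict Min edge unfolding strict_policy_bias_def by force
    then show ?thesis
      using False unfolding succ_def by simp
  qed (simp add: succ_def)
  then show "succ Vmax \<sigma> \<tau> k \<in> {k \<in> verts n. \<forall>l\<in>verts n. u l - u' l \<le> u k - u' k}"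
    using gk max eq by simp
qed

lemma argmin_bias_diff_invariant:
  assumes pp: "policy_pair n E Vmax \<sigma> \<tau>" and strict: "strict_policy_bias n E Vmax r \<sigma> \<tau> lam u"
    and pp': "policy_pair n E Vmax \<sigma>' \<tau>'" and bias': "policy_bias n E Vmax r \<sigma>' \<tau>' lam u'"
  shows "succ Vmax \<sigma> \<tau> ` {k \<in> verts n. \<forall>l\<in>verts n. u k - u' k \<le> u l - u' l}
           \<subseteq> {k \<in> verts n. \<forall>l\<in>verts n. u k - u' k \<le> u l - u' l}"
proof -
  interpret dual: game n E "Vmin n Vmax"
    by (rule dual_game)
  have "(- u) l - (- u') l \<le> (- u) k - (- u') k \<longleftrightarrow> u k - u' k \<le> u l - u' l" for k l
    by auto
  then show ?thesis
    using dual.argmax_bias_diff_invariant[of \<tau> \<sigma> "- r" "- lam" "- u" \<tau>' \<sigma>' "- u'"] pp pp' strict bias'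
    by (simp add: policy_pair_dual strict_policy_bias_dual policy_bias_dual succ_dual)
qed

lemma strict_policy_bias_diff_const:
  assumes xi: "(\<sigma>, \<tau>) \<in> Xi n E Vmax" and strict: "strict_policy_bias n E Vmax r \<sigma> \<tau> lam u"
    and pp': "policy_pair n E Vmax \<sigma>' \<tau>'" and bias': "policy_bias n E Vmax r \<sigma>' \<tau>' lam u'"
  obtains c where "\<forall>k\<in>verts n. u' k = u k + c"
proof -
  define e where "e k = u k - u' k" for k
  define A where "A = {k \<in> verts n. \<forall>l\<in>verts n. e l \<le> e k}"
  define B where "B = {k \<in> verts n. \<forall>l\<in>verts n. e k \<le> e l}"
  have pp: "policy_pair n E Vmax \<sigma> \<tau>"
    using xi unfolding Xi_def by simp
  have invA: "succ Vmax \<sigma> \<tau> ` A \<subseteq> A"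
    using argmax_bias_diff_invariant[OF pp strict pp' bias'] unfolding A_def e_def .
  have invB: "succ Vmax \<sigma> \<tau> ` B \<subseteq> B"
    using argmin_bias_diff_invariant[OF pp strict pp' bias'] unfolding B_def e_def .
  have V: "verts n \<noteq> {}"
    using the_cycle_Xi(2,3)[OF xi] by blast
  obtain a where "a \<in> A"
  proof -
    obtain k where "k \<in> verts n" "\<forall>l\<in>verts n. e l \<le> e k"
      by (rule finite_ex_argmax[OF finite_verts V])
    then show thesis
      using that unfolding A_def by blast
  qed
  obtain b where "b \<in> B"
  proof -
    obtain k where "k \<in> verts n" "\<forall>l\<in>verts n. - e l \<le> - e k"
      by (rule finite_ex_argmax[OF finite_verts V])
    then show thesis
      using that unfolding B_def by simp
  qed
  have "the_cycle n Vmax \<sigma> \<tau> \<subseteq> A" "the_cycle n Vmax \<sigma> \<tau> \<subseteq> B"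
    using unique_cycle_subset[OF finite_verts cycles_Xi[OF xi] _ invA \<open>a \<in> A\<close>]
      unique_cycle_subset[OF finite_verts cycles_Xi[OF xi] _ invB \<open>b \<in> B\<close>]
    unfolding A_def B_def by blast+
  then obtain c where "c \<in> A" "c \<in> B"
    using the_cycle_Xi(2)[OF xi] by blast
  then have "e k = e c" if "k \<in> verts n" for k
    using that unfolding A_def B_def by (auto intro: order.antisym)
  then have "u' k = u k + (u' c - u c)" if "k \<in> verts n" for k
    using that unfolding e_def by fastforce
  then show thesis
    using that by blast
qed

lemma policies_eq_of_strict:
  assumes pp: "policy_pair n E Vmax \<sigma> \<tau>" and strict: "strict_policy_bias n E Vmax r \<sigma> \<tau> lam u"
    and pp': "policy_pair n E Vmax \<sigma>' \<tau>'" and bias': "policy_bias n E Vmax r \<sigma>' \<tau>' lam u'"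
    and const: "\<forall>k\<in>verts n. u' k = u k + c"
  shows "\<sigma>' = \<sigma> \<and> \<tau>' = \<tau>"
proof -
  have succ_eq: "succ Vmax \<sigma>' \<tau>' k = succ Vmax \<sigma> \<tau> k" if k: "k \<in> verts n" for k
  proof (rule ccontr)
    assume ne: "succ Vmax \<sigma>' \<tau>' k \<noteq> succ Vmax \<sigma> \<tau> k"
    let ?l = "succ Vmax \<sigma>' \<tau>' k"
    have edge: "(k, ?l) \<in> E"
      by (rule succ_edge[OF pp' k])
    have "lam + u' k = r (k, ?l) + u' ?l"
      by (rule policy_bias_succ[OF bias' k])
    then have tie: "lam + u k = r (k, ?l) + u ?l"
      using const k edge_verts[OF edge] by simp
    show False
    proof (cases "k \<in> Vmax")
      case True
      then have "r (k, ?l) + u ?l < lam + u k"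
        using strict edge ne unfolding strict_policy_bias_def succ_def by simp
      with tie show False
        by simp
    next
      case False
      then have "k \<in> Vmin n Vmax"
        using k unfolding Vmin_def by blast
      then have "lam + u k < r (k, ?l) + u ?l"
        using False strict edge ne unfolding strict_policy_bias_def succ_def by simp
      with tie show False
        by simp
    qed
  qed
  have "\<sigma>' k = \<sigma> k" for k
    using succ_eq[of k] Vmax_subset_verts pp pp' unfolding policy_pair_def succ_def by (cases "k \<in> Vmax") auto
  moreover have "\<tau>' k = \<tau> k" for k
    using succ_eq[of k] pp pp' unfolding policy_pair_def succ_def Vmin_def by (cases "k \<in> Vmin n Vmax") (auto simp: Vmin_def)
  ultimately show ?thesis
    by blast
qed

lemma P_pol_of_strict:
  assumes xi: "(\<sigma>, \<tau>) \<in> Xi n E Vmax" and strict: "strict_policy_bias n E Vmax r \<sigma> \<tau> lam u"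
  shows "r \<in> P_pol n E Vmax \<sigma> \<tau>"
proof -
  have pp: "policy_pair n E Vmax \<sigma> \<tau>"
    using xi unfolding Xi_def by simp
  have bias: "policy_bias n E Vmax r \<sigma> \<tau> lam u"
    using strict unfolding strict_policy_bias_def by simp
  have "\<sigma>' = \<sigma> \<and> \<tau>' = \<tau>" if induced: "bias_induced n E Vmax r \<sigma>' \<tau>'" for \<sigma>' \<tau>'
  proof -
    obtain lam' u' where pp': "policy_pair n E Vmax \<sigma>' \<tau>'" and bias': "policy_bias n E Vmax r \<sigma>' \<tau>' lam' u'"
      using induced bias_induced_iff by blast
    have "lam' = lam"
      using policy_bias_value_unique[OF pp' bias' pp bias] the_cycle_Xi(2,3)[OF xi] by blast
    with bias' obtain c where "\<forall>k\<in>verts n. u' k = u k + c"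
      using strict_policy_bias_diff_const[OF xi strict pp'] by blast
    then show ?thesis
      using policies_eq_of_strict[OF pp strict pp'] bias' \<open>lam' = lam\<close> by blast
  qed
  then show ?thesis
    using pp bias bias_induced_iff unfolding P_pol_def by blast
qed

section \<open>Perturbing the weight of an unused edge\<close>

lemma strict_policy_bias_update_Max:
  assumes strict: "strict_policy_bias n E Vmax r \<sigma> \<tau> lam u" and i: "i \<in> Vmax" and j: "j \<noteq> \<sigma> i"
    and x: "x + u j < lam + u i"
  shows "strict_policy_bias n E Vmax (r((i, j) := x)) \<sigma> \<tau> lam u"
proof -
  have "i \<notin> Vmin n Vmax"
    using i unfolding Vmin_def by blast
  then show ?thesis
    using strict x j unfolding strict_policy_bias_def policy_bias_def
    by (auto simp: fun_upd_apply split: if_splits)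
qed

lemma policy_bias_of_update_Max:
  assumes bias: "policy_bias n E Vmax (r((i, j) := x)) \<sigma> \<tau> lam u" and i: "i \<in> Vmax"
    and j: "\<sigma> i \<noteq> j" and x: "r (i, j) \<le> x"
  shows "policy_bias n E Vmax r \<sigma> \<tau> lam u"
proof -
  have "i \<notin> Vmin n Vmax"
    using i unfolding Vmin_def by blast
  then show ?thesis
    using bias x j unfolding policy_bias_def
    by (auto simp: fun_upd_apply split: if_splits) (smt (verit))
qed

lemma P_pol_update_Max:
  assumes xi: "(\<sigma>, \<tau>) \<in> Xi n E Vmax" and strict: "strict_policy_bias n E Vmax r \<sigma> \<tau> lam u"
    and i: "i \<in> Vmax" and j: "j \<noteq> \<sigma> i" and x: "x < lam + u i - u j"
  shows "r((i, j) := x) \<in> P_pol n E Vmax \<sigma> \<tau>"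
proof (rule P_pol_of_strict[OF xi])
  show "strict_policy_bias n E Vmax (r((i, j) := x)) \<sigma> \<tau> lam u"
    using x by (intro strict_policy_bias_update_Max[OF strict i j]) simp
qed

lemma bias_induced_update_Max_le:
  assumes xi: "(\<sigma>, \<tau>) \<in> Xi n E Vmax" and P: "r \<in> P_pol n E Vmax \<sigma> \<tau>"
    and strict: "strict_policy_bias n E Vmax r \<sigma> \<tau> lam u"
    and i: "i \<in> Vmax" and ij: "(i, j) \<in> E" and j: "j \<noteq> \<sigma> i"
    and induced: "bias_induced n E Vmax (r((i, j) := x)) \<sigma>' \<tau>'" and j': "\<sigma>' i \<noteq> j"
  shows "x \<le> lam + u i - u j"
proof (cases "x \<le> r (i, j)")
  case True
  moreover have "r (i, j) + u j < lam + u i"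
    using strict i ij j unfolding strict_policy_bias_def by blast
  ultimately show ?thesis
    by simp
next
  case False
  obtain lam' u' where pp': "policy_pair n E Vmax \<sigma>' \<tau>'"
    and bias': "policy_bias n E Vmax (r((i, j) := x)) \<sigma>' \<tau>' lam' u'"
    using induced bias_induced_iff by blast
  have "policy_bias n E Vmax r \<sigma>' \<tau>' lam' u'"
    using policy_bias_of_update_Max[OF bias' i j'] False by simp
  then have "bias_induced n E Vmax r \<sigma>' \<tau>'"
    using pp' bias_induced_iff by blast
  then have "\<sigma>' = \<sigma>" "\<tau>' = \<tau>"
    using P unfolding P_pol_def by auto
  moreover have ij_verts: "i \<in> verts n" "j \<in> verts n"
    using edge_verts[OF ij] by auto
  moreover have "\<forall>k\<in>verts n. (r((i, j) := x)) (k, succ Vmax \<sigma> \<tau> k) = r (k, succ Vmax \<sigma> \<tau> k)"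
    using i j unfolding succ_def by auto
  ultimately have "lam_pol n Vmax \<sigma> \<tau> r + u_pol n Vmax \<sigma> \<tau> r i - u_pol n Vmax \<sigma> \<tau> r j = lam' + u' i - u' j"
    using lam_pol_u_pol_difference[OF xi] bias' by metis
  moreover have "policy_bias n E Vmax r \<sigma> \<tau> lam u"
    using strict unfolding strict_policy_bias_def by simp
  then have "lam_pol n Vmax \<sigma> \<tau> r + u_pol n Vmax \<sigma> \<tau> r i - u_pol n Vmax \<sigma> \<tau> r j = lam + u i - u j"
    using lam_pol_u_pol_difference[OF xi _ _ ij_verts] by simp
  moreover have "x + u' j \<le> lam' + u' i"
    using bias' i ij unfolding policy_bias_def by force
  ultimately show ?thesis
    by simp
qed

lemma Z_at_Max:
  assumes xi: "(\<sigma>, \<tau>) \<in> Xi n E Vmax" and P: "r \<in> P_pol n E Vmax \<sigma> \<tau>"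
    and i: "i \<in> Vmax" and ij: "(i, j) \<in> E" and j: "j \<noteq> \<sigma> i"
  shows "Z n E Vmax r i j = lam_pol n Vmax \<sigma> \<tau> r + u_pol n Vmax \<sigma> \<tau> r i - u_pol n Vmax \<sigma> \<tau> r j"
proof -
  obtain lam u where strict: "strict_policy_bias n E Vmax r \<sigma> \<tau> lam u"
    using strict_policy_bias_of_P_pol[OF P] .
  define S where "S = {x. r((i, j) := x) \<in> U_set n E Vmax \<and>
    (\<exists>\<sigma>' \<tau>'. (\<sigma>', \<tau>') \<in> Xi n E Vmax \<and> bias_induced n E Vmax (r((i, j) := x)) \<sigma>' \<tau>' \<and> \<sigma>' i \<noteq> j)}"
  have "x \<in> S" if "x < lam + u i - u j" for x
  proof -
    have "r((i, j) := x) \<in> P_pol n E Vmax \<sigma> \<tau>"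
      by (rule P_pol_update_Max[OF xi strict i j that])
    then show ?thesis
      using xi j unfolding S_def mem_U_set_iff P_pol_def by blast
  qed
  moreover have "S \<subseteq> {..lam + u i - u j}"
    using bias_induced_update_Max_le[OF xi P strict i ij j] unfolding S_def by blast
  moreover have "Z n E Vmax r i j = Sup S"
    using i unfolding Z_def S_def Vmin_def by simp
  moreover have "policy_bias n E Vmax r \<sigma> \<tau> lam u"
    using strict unfolding strict_policy_bias_def by simp
  then have "lam_pol n Vmax \<sigma> \<tau> r + u_pol n Vmax \<sigma> \<tau> r i - u_pol n Vmax \<sigma> \<tau> r j = lam + u i - u j"
    using lam_pol_u_pol_difference[OF xi] edge_verts[OF ij] by simp
  ultimately show ?thesis
    using cSup_eq_between[of "lam + u i - u j" S] by auto
qed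

lemma Z_at_Min:
  assumes xi: "(\<sigma>, \<tau>) \<in> Xi n E Vmax" and P: "r \<in> P_pol n E Vmax \<sigma> \<tau>"
    and i: "i \<in> Vmin n Vmax" and ij: "(i, j) \<in> E" and j: "j \<noteq> \<tau> i"
  shows "Z n E Vmax r i j = lam_pol n Vmax \<sigma> \<tau> r + u_pol n Vmax \<sigma> \<tau> r i - u_pol n Vmax \<sigma> \<tau> r j"
proof -
  interpret dual: game n E "Vmin n Vmax"
    by (rule dual_game)
  have pp: "policy_pair n E Vmax \<sigma> \<tau>"
    using xi unfolding Xi_def by simp
  have "Z n E (Vmin n Vmax) (- r) i j
      = lam_pol n (Vmin n Vmax) \<tau> \<sigma> (- r) + u_pol n (Vmin n Vmax) \<tau> \<sigma> (- r) i - u_pol n (Vmin n Vmax) \<tau> \<sigma> (- r) j"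
    using dual.Z_at_Max[of \<tau> \<sigma> "- r" i j] xi P i ij j by (simp add: Xi_dual P_pol_dual)
  then show ?thesis
    using Z_dual[OF i] by (simp add: lam_pol_dual[OF pp] u_pol_dual[OF pp])
qed

end

theorem mainTheorem13:
  fixes n :: nat and E :: "(nat \<times> nat) set" and Vmax :: "nat set"
    and r :: "nat \<times> nat \<Rightarrow> real" and \<sigma> \<tau> :: "nat \<Rightarrow> nat" and i j :: nat
  assumes "game_graph n E Vmax"
    and "ergodic_graph n E Vmax"
    and "(\<sigma>, \<tau>) \<in> Xi n E Vmax"
    and "r \<in> P_pol n E Vmax \<sigma> \<tau>"
    and "(i, j) \<in> E"
    and "(i \<in> Vmax \<and> j \<noteq> \<sigma> i) \<or> (i \<in> Vmin n Vmax \<and> j \<noteq> \<tau> i)"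
  shows "Z n E Vmax r i j
           = lam_pol n Vmax \<sigma> \<tau> r + u_pol n Vmax \<sigma> \<tau> r i - u_pol n Vmax \<sigma> \<tau> r j"
proof -
  interpret game n E Vmax
    using assms(1) by unfold_locales
  show ?thesis
    using assms(6) Z_at_Max[OF assms(3,4) _ assms(5)] Z_at_Min[OF assms(3,4) _ assms(5)] by blast
qed

end
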